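(* Let $n$ be an odd positive integer, and let $a,b$ be distinct integers with $0<a,b<n$, $b$ odd and $a$ even, such that $G=C_{2n}(a,b,n)$ is a connected $5$-regular circulant graph. Then $G$ admits a factorization (in the sense described in the context) as a Cartesian product of a $3$-regular circulant graph and a $2$-regular circulant graph if and only if there exist positive integers $p,q$ with $p>2$, $1<q<n$, $p\mid a$, $q\mid b$, $pq=2n$ and $\gcd(p,q)=1$.
   Context: For an integer $m$ and a set $R$ of positive integers each at most $m/2$, the circulant graph $C_m(R)$ has vertex set $\{0,1,\dots,m-1\}$, with $i$ and $j$ adjacent iff $\min(|i-j|,\,m-|i-j|)\in R$; it is regular of degree $2|R|$ if $m/2\notin R$ and of degree $2|R|-1$ if $m/2\in R$. $C_{2n}(a,b,n)$ denotes the circulant graph on $2n$ vertices with jump set $\{a,b,n\}$. The Cartesian product $G_1\square G_2$ has vertex set $V(G_1)\times V(G_2)$, with $(u_1,v_1)\sim(u_2,v_2)$ iff either $u_1=u_2$ and $v_1v_2\in E(G_2)$, or $v_1=v_2$ and $u_1u_2\in E(G_1)$. The factorization theorem for circulant graphs states: if $p,q$ are relatively prime, $R\subseteq[1,p/2]$, $S\subseteq[1,q/2]$ and $T=qR\cup pS$ (where $qR=\{qr:r\in R\}$, $pS=\{ps:s\in S\}$), then $C_{pq}(T)\cong C_p(R)\square C_q(S)$. "$G=C_{2n}(a,b,n)$ admits a factorization as a Cartesian product of a $3$-regular and a $2$-regular circulant graph" means: there exist relatively prime integers $p,q>1$ with $pq=2n$ and sets of integers $R\subseteq[1,p/2]$,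 $S\subseteq[1,q/2]$ with $qR\cup pS=\{a,b,n\}$, such that $C_p(R)$ is $3$-regular and $C_q(S)$ is $2$-regular (so that $G\cong C_p(R)\square C_q(S)$ by the factorization theorem). *)

theory Defs
  imports Main
begin

definition circ_adj :: "nat \<Rightarrow> nat set \<Rightarrow> nat \<Rightarrow> nat \<Rightarrow> bool" where
  "circ_adj m R i j \<longleftrightarrow> i < m \<and> j < m \<and>
     (let d = (if i \<le> j then j - i else i - j) in min d (m - d) \<in> R)"

definition jump_set :: "nat \<Rightarrow> nat set \<Rightarrow> bool" where
  "jump_set m R \<longleftrightarrow> (\<forall>r\<in>R. 1 \<le> r \<and> 2 * r \<le> m)"

definition circ_degree :: "nat \<Rightarrow> nat set \<Rightarrow> nat \<Rightarrow> nat" where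
  "circ_degree m R i = card {j. j < m \<and> circ_adj m R i j}"

definition circ_regular :: "nat \<Rightarrow> nat set \<Rightarrow> nat \<Rightarrow> bool" where
  "circ_regular m R k \<longleftrightarrow> (\<forall>i<m. circ_degree m R i = k)"

definition circ_connected :: "nat \<Rightarrow> nat set \<Rightarrow> bool" where
  "circ_connected m R \<longleftrightarrow> (\<forall>i<m. \<forall>j<m. (circ_adj m R)\<^sup>*\<^sup>* i j)"

definition admits_3_2_factorization :: "nat \<Rightarrow> nat \<Rightarrow> nat \<Rightarrow> bool" where
  "admits_3_2_factorization n a b \<longleftrightarrow>
     (\<exists>p q R S. p > 1 \<and> q > 1 \<and> coprime p q \<and> p * q = 2 * n \<and>
        jump_set p R \<and> jump_set q S \<and>
        (\<lambda>r. q * r) ` R \<union> (\<lambda>s. p * s) ` S = {a, b, n} \<and>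
        circ_regular p R 3 \<and> circ_regular q S 2)"

end

theory Submission
  imports Defs
begin

(* A circulant graph is vertex-transitive, and the neighbours of 0 in C_m(R) are the jumps
   in R together with m - r for the jumps r < m/2. So C_m(R) is k-regular iff
   2 |{r in R. 2r < m}| + |{r in R. 2r = m}| = k: a 3-regular factor C_p(R) has p even and
   R = {r, p/2} with 0 < r < p/2, and a 2-regular factor C_q(S) has S = {s} with 0 < s < q/2.
   The jump set of the product is then {qr, q(p/2), ps} = {qr, n, ps}; as ps is even and b
   is odd, b = qr and a = ps. Conversely, p | a and q | b with pq = 2n give the factors
   with R = {b/q, p/2} and S = {a/p}. *)

lemma circ_adj_0_iff: "circ_adj m R 0 j \<longleftrightarrow> j < m \<and> min j (m - j) \<in> R"
  by (auto simp: circ_adj_def Let_def)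

lemma circ_adj_iff_circ_adj_0:
  assumes "i < m" "j < m"
  shows "circ_adj m R i j \<longleftrightarrow> circ_adj m R 0 ((j + m - i) mod m)"
proof (cases "i \<le> j")
  case True
  then have "(j + m - i) mod m = j - i"
    using assms by (simp add: mod_if)
  then show ?thesis
    using True assms by (simp add: circ_adj_0_iff circ_adj_def less_imp_diff_less)
next
  case False
  then have "j + m - i < m"
    using assms by arith
  then show ?thesis
    using False assms by (simp add: circ_adj_def circ_adj_0_iff add.commute[of j m] min.commute)
qed

lemma circ_degree_eq_circ_degree_0:
  assumes "i < m"
  shows "circ_degree m R i = circ_degree m R 0"
proof -
  let ?rot = "\<lambda>x. (x + i) mod m"
  have rot_inverse: "?rot ((j + m - i) mod m) = j" if "j < m" for j
    using assms that by (simp add: mod_add_left_eq)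
  have unrot_rot: "(?rot x + m - i) mod m = x" if "x < m" for x
  proof (cases "x + i < m")
    case True
    then show ?thesis
      using that by simp
  next
    case False
    then have "?rot x = x + i - m"
      using assms that by (simp add: le_mod_geq)
    then show ?thesis
      using False that by simp
  qed
  have rot_inj: "inj_on ?rot {..<m}"
    by (rule inj_on_inverseI[where g = "\<lambda>y. (y + m - i) mod m"]) (use unrot_rot in auto)
  have "{j. j < m \<and> circ_adj m R i j} = ?rot ` {x. x < m \<and> circ_adj m R 0 x}"
  proof (rule set_eqI, rule iffI)
    fix j assume "j \<in> {j. j < m \<and> circ_adj m R i j}"
    then show "j \<in> ?rot ` {x. x < m \<and> circ_adj m R 0 x}"
      using rot_inverse[of j] assms circ_adj_iff_circ_adj_0[of i m j R]
      by (intro image_eqI[of _ _ "(j + m - i) mod m"]) auto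
  next
    fix j assume "j \<in> ?rot ` {x. x < m \<and> circ_adj m R 0 x}"
    then obtain x where x: "x < m" "circ_adj m R 0 x" and j: "j = ?rot x" by auto
    have "j < m"
      using j assms by simp
    moreover have "circ_adj m R i j"
      using circ_adj_iff_circ_adj_0[OF assms \<open>j < m\<close>] unrot_rot[OF x(1)] x(2) j by simp
    ultimately show "j \<in> {j. j < m \<and> circ_adj m R i j}"
      by simp
  qed
  moreover have "inj_on ?rot {x. x < m \<and> circ_adj m R 0 x}"
    by (rule inj_on_subset[OF rot_inj]) auto
  ultimately show ?thesis
    by (simp add: circ_degree_def card_image)
qed

lemma finite_jump_set: "jump_set m R \<Longrightarrow> finite R"
  by (rule finite_subset[of _ "{..m}"]) (auto simp: jump_set_def)

lemma jump_set_split: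
  assumes "jump_set m R"
  shows "R = {r\<in>R. 2 * r < m} \<union> {r\<in>R. 2 * r = m}"
  using assms by (auto simp: jump_set_def)

lemma circ_neighbours_0:
  assumes "jump_set m R"
  shows "{j. j < m \<and> circ_adj m R 0 j} = R \<union> (\<lambda>r. m - r) ` {r\<in>R. 2 * r < m}"
proof (rule set_eqI, rule iffI)
  fix j assume "j \<in> {j. j < m \<and> circ_adj m R 0 j}"
  then have j: "j < m" "min j (m - j) \<in> R"
    by (auto simp: circ_adj_0_iff)
  show "j \<in> R \<union> (\<lambda>r. m - r) ` {r\<in>R. 2 * r < m}"
  proof (cases "j \<le> m - j")
    case True
    then show ?thesis
      using j by auto
  next
    case False
    then have "m - j \<in> {r\<in>R. 2 * r < m}" "j = m - (m - j)"
      using j by auto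
    then show ?thesis
      by blast
  qed
next
  fix j assume "j \<in> R \<union> (\<lambda>r. m - r) ` {r\<in>R. 2 * r < m}"
  then show "j \<in> {j. j < m \<and> circ_adj m R 0 j}"
    using assms by (auto simp: circ_adj_0_iff jump_set_def min_def)
qed

lemma circ_degree_0:
  assumes "jump_set m R"
  shows "circ_degree m R 0 = 2 * card {r\<in>R. 2 * r < m} + card {r\<in>R. 2 * r = m}"
proof -
  let ?short = "{r\<in>R. 2 * r < m}" and ?half = "{r\<in>R. 2 * r = m}"
  have fin: "finite R"
    using assms by (rule finite_jump_set)
  have "card (R \<union> (\<lambda>r. m - r) ` ?short) = card R + card ((\<lambda>r. m - r) ` ?short)"
    using fin assms by (intro card_Un_disjoint) (auto simp: jump_set_def)
  also have "card ((\<lambda>r. m - r) ` ?short) = card ?short"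
    by (rule card_image) (auto simp: inj_on_def)
  also have "card R = card ?short + card ?half"
    using fin by (subst jump_set_split[OF assms]) (intro card_Un_disjoint, auto)
  finally show ?thesis
    by (simp add: circ_degree_def circ_neighbours_0[OF assms])
qed

lemma circ_regular_iff:
  assumes "jump_set m R" "0 < m"
  shows "circ_regular m R k \<longleftrightarrow> 2 * card {r\<in>R. 2 * r < m} + card {r\<in>R. 2 * r = m} = k"
  using assms circ_degree_eq_circ_degree_0[of _ m R] circ_degree_0[OF assms(1)]
  by (auto simp: circ_regular_def)

lemma card_half_jumps_le_1: "card {r\<in>R. 2 * r = (m::nat)} \<le> 1"
proof -
  have "{r\<in>R. 2 * r = m} \<subseteq> {m div 2}"
    by auto
  then show ?thesis
    using card_mono[of "{m div 2}"] by simp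
qed

lemma circ_regular_2_iff:
  assumes "jump_set m R" "0 < m"
  shows "circ_regular m R 2 \<longleftrightarrow> (\<exists>s. R = {s} \<and> 2 * s < m)"
proof
  assume "circ_regular m R 2"
  then have "2 * card {r\<in>R. 2 * r < m} + card {r\<in>R. 2 * r = m} = 2"
    using circ_regular_iff[OF assms] by simp
  moreover have "x = 1 \<and> y = 0" if "2 * x + y = 2" "y \<le> 1" for x y :: nat
    using that by presburger
  ultimately have "card {r\<in>R. 2 * r < m} = 1" "card {r\<in>R. 2 * r = m} = 0"
    using card_half_jumps_le_1[of R m] by blast+
  moreover have "finite R"
    using assms(1) by (rule finite_jump_set)
  ultimately obtain s where short: "{r\<in>R. 2 * r < m} = {s}" and half: "{r\<in>R. 2 * r = m} = {}"
    by (auto simp: card_1_singleton_iff)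
  have "R = {s}"
    using jump_set_split[OF assms(1)] unfolding short half by simp
  moreover have "2 * s < m"
    using short by blast
  ultimately show "\<exists>s. R = {s} \<and> 2 * s < m"
    by blast
next
  assume "\<exists>s. R = {s} \<and> 2 * s < m"
  then obtain s where "R = {s}" "2 * s < m"
    by blast
  then have short: "{r\<in>R. 2 * r < m} = {s}" and half: "{r\<in>R. 2 * r = m} = {}"
    by auto
  show "circ_regular m R 2"
    unfolding circ_regular_iff[OF assms] short half by simp
qed

lemma circ_regular_3_iff:
  assumes "jump_set m R" "0 < m"
  shows "circ_regular m R 3 \<longleftrightarrow> even m \<and> (\<exists>r. R = {r, m div 2} \<and> 2 * r < m)"
proof
  assume "circ_regular m R 3"
  then have "2 * card {r\<in>R. 2 * r < m} + card {r\<in>R. 2 * r = m} = 3"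
    using circ_regular_iff[OF assms] by simp
  moreover have "x = 1 \<and> y = 1" if "2 * x + y = 3" "y \<le> 1" for x y :: nat
    using that by presburger
  ultimately have "card {r\<in>R. 2 * r < m} = 1" "card {r\<in>R. 2 * r = m} = 1"
    using card_half_jumps_le_1[of R m] by blast+
  then obtain r h where short: "{r\<in>R. 2 * r < m} = {r}" and half: "{r\<in>R. 2 * r = m} = {h}"
    by (auto simp: card_1_singleton_iff)
  have "2 * h = m"
    using half by blast
  then have "even m" "R = {r, m div 2}"
    using jump_set_split[OF assms(1)] unfolding short half by auto
  moreover have "2 * r < m"
    using short by blast
  ultimately show "even m \<and> (\<exists>r. R = {r, m div 2} \<and> 2 * r < m)"
    by blast
next
  assume "even m \<and> (\<exists>r. R = {r, m div 2} \<and> 2 * r < m)"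
  then obtain r where "even m" "R = {r, m div 2}" "2 * r < m"
    by blast
  then have short: "{r\<in>R. 2 * r < m} = {r}" and half: "{r\<in>R. 2 * r = m} = {m div 2}"
    by auto
  show "circ_regular m R 3"
    unfolding circ_regular_iff[OF assms] short half by simp
qed

lemma admits_3_2_factorization_iff:
  "admits_3_2_factorization n a b \<longleftrightarrow>
    (\<exists>p q r s. 1 < p \<and> 1 < q \<and> coprime p q \<and> p * q = 2 * n \<and> even p \<and>
       0 < r \<and> 2 * r < p \<and> 0 < s \<and> 2 * s < q \<and> {q * r, n, p * s} = {a, b, n})"
proof
  assume "admits_3_2_factorization n a b"
  then obtain p q R S where pq: "1 < p" "1 < q" "coprime p q" "p * q = 2 * n"
    and jumps: "jump_set p R" "jump_set q S"
    and image: "(\<lambda>r. q * r) ` R \<union> (\<lambda>s. p * s) ` S = {a, b, n}"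
    and regular: "circ_regular p R 3" "circ_regular q S 2"
    unfolding admits_3_2_factorization_def by blast
  obtain r where "even p" and R: "R = {r, p div 2}" and "2 * r < p"
    using regular(1) circ_regular_3_iff[OF jumps(1)] pq(1) by auto
  obtain s where S: "S = {s}" and "2 * s < q"
    using regular(2) circ_regular_2_iff[OF jumps(2)] pq(2) by auto
  have "q * (p div 2) = n"
    using pq(4) \<open>even p\<close> by (elim evenE) (simp add: mult.commute)
  then have "{q * r, n, p * s} = {a, b, n}"
    using image unfolding R S by (simp add: insert_commute)
  moreover have "0 < r" "0 < s"
    using jumps unfolding R S jump_set_def by auto
  ultimately show "\<exists>p q r s. 1 < p \<and> 1 < q \<and> coprime p q \<and> p * q = 2 * n \<and> even p \<and>
       0 < r \<and> 2 * r < p \<and> 0 < s \<and> 2 * s < q \<and> {q * r, n, p * s} = {a, b, n}"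
    using pq \<open>even p\<close> \<open>2 * r < p\<close> \<open>2 * s < q\<close> by blast
next
  assume "\<exists>p q r s. 1 < p \<and> 1 < q \<and> coprime p q \<and> p * q = 2 * n \<and> even p \<and>
       0 < r \<and> 2 * r < p \<and> 0 < s \<and> 2 * s < q \<and> {q * r, n, p * s} = {a, b, n}"
  then obtain p q r s where pq: "1 < p" "1 < q" "coprime p q" "p * q = 2 * n" "even p"
    and r: "0 < r" "2 * r < p" and s: "0 < s" "2 * s < q"
    and jumps: "{q * r, n, p * s} = {a, b, n}"
    by blast
  define R where "R = {r, p div 2}"
  define S where "S = {s}"
  have "jump_set p R" "jump_set q S"
    using pq r s by (auto simp: R_def S_def jump_set_def)
  moreover have "circ_regular p R 3" "circ_regular q S 2"
    using pq r s circ_regular_3_iff[OF \<open>jump_set p R\<close>] circ_regular_2_iff[OF \<open>jump_set q S\<close>]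
    by (auto simp: R_def S_def)
  moreover have "q * (p div 2) = n"
    using pq(4,5) by (elim evenE) (simp add: mult.commute)
  then have "(\<lambda>r. q * r) ` R \<union> (\<lambda>s. p * s) ` S = {a, b, n}"
    using jumps by (simp add: R_def S_def insert_commute)
  ultimately show "admits_3_2_factorization n a b"
    unfolding admits_3_2_factorization_def using pq by blast
qed

lemma double_less_factor_iff:
  fixes p q n r :: nat
  assumes "p * q = 2 * n" "0 < q"
  shows "2 * r < p \<longleftrightarrow> q * r < n"
proof -
  have "2 * r < p \<longleftrightarrow> q * (2 * r) < q * p"
    using assms(2) by simp
  also have "\<dots> \<longleftrightarrow> q * r < n"
    using assms(1) by (simp add: mult.commute mult.left_commute)
  finally show ?thesis .
qed

lemma three_jumps_eqD:
  fixes a b n x y :: nat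
  assumes "{x, n, y} = {a, b, n}" "odd b" "even y" "a \<noteq> b" "a < n" "b < n"
  shows "b = x" "a = y"
proof -
  have "b \<in> {x, n, y}" "a \<in> {x, n, y}"
    using assms(1) by auto
  then show "b = x"
    using assms(2,3,6) by auto
  then show "a = y"
    using \<open>a \<in> {x, n, y}\<close> assms(4,5) by auto
qed

theorem theorem30:
  fixes n a b :: nat
  assumes "odd n" and "n > 0"
    and "a \<noteq> b" and "0 < a" and "a < n" and "0 < b" and "b < n"
    and "odd b" and "even a"
    and "circ_connected (2 * n) {a, b, n}"
    and "circ_regular (2 * n) {a, b, n} 5"
  shows "admits_3_2_factorization n a b \<longleftrightarrow>
    (\<exists>p q :: nat. p > 2 \<and> 1 < q \<and> q < n \<and> p dvd a \<and> q dvd b \<and>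
        p * q = 2 * n \<and> gcd p q = 1)"
  unfolding admits_3_2_factorization_iff coprime_iff_gcd_eq_1
proof (intro iffI; elim exE conjE)
  fix p q r s
  assume pq: "1 < p" "1 < q" "gcd p q = 1" "p * q = 2 * n" "even p"
    and "0 < r" "2 * r < p" "0 < s" "2 * s < q"
    and jumps: "{q * r, n, p * s} = {a, b, n}"
  have "even (p * s)"
    using \<open>even p\<close> by simp
  then have "b = q * r" "a = p * s"
    using three_jumps_eqD[OF jumps \<open>odd b\<close> _ \<open>a \<noteq> b\<close> \<open>a < n\<close> \<open>b < n\<close>] by simp_all
  moreover have "2 < p"
    using \<open>0 < r\<close> \<open>2 * r < p\<close> by linarith
  moreover have "q < n"
    using double_less_factor_iff[OF pq(4), of 1] pq(2) \<open>2 < p\<close> by simp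
  ultimately show "\<exists>p q. 2 < p \<and> 1 < q \<and> q < n \<and> p dvd a \<and> q dvd b \<and> p * q = 2 * n \<and> gcd p q = 1"
    using pq by (intro exI[of _ p] exI[of _ q]) simp
next
  fix p q
  assume pq: "2 < p" "1 < q" "q < n" "p dvd a" "q dvd b" "p * q = 2 * n" "gcd p q = 1"
  obtain r s where "b = q * r" "a = p * s"
    using pq(4,5) by (auto elim!: dvdE)
  have "even p"
    using pq(6) \<open>odd b\<close> \<open>b = q * r\<close> by (metis dvd_triv_left even_mult_iff)
  moreover have "2 * r < p" "2 * s < q"
    using double_less_factor_iff[OF pq(6)] double_less_factor_iff[of q p n] pq(1,2,6)
      \<open>b < n\<close> \<open>a < n\<close> \<open>b = q * r\<close> \<open>a = p * s\<close> by (simp_all add: mult.commute)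
  moreover have "0 < r" "0 < s" "{q * r, n, p * s} = {a, b, n}"
    using \<open>0 < b\<close> \<open>0 < a\<close> \<open>b = q * r\<close> \<open>a = p * s\<close> by auto
  moreover have "1 < p"
    using pq(1) by simp
  ultimately show "\<exists>p q r s. 1 < p \<and> 1 < q \<and> gcd p q = 1 \<and> p * q = 2 * n \<and> even p \<and>
       0 < r \<and> 2 * r < p \<and> 0 < s \<and> 2 * s < q \<and> {q * r, n, p * s} = {a, b, n}"
    using pq(2,6,7) by metis
qed

end
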